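(* Let $n\ge2$ and $0\le\delta<\frac1n$. Let $P^0=[d_1\ \cdots\ d_{n+1}]$ be the canonical uniform simplex in $\mathbb R^{n}$. Define the matrix $P^\delta$ with columns $[P^\delta]_1=d_1$ and $[P^\delta]_i=\alpha(d_i+\delta e_1)$ for $2\le i\le n+1$, where $\alpha=\frac{n}{\sqrt{n^2\delta^2-2n\delta+n^2}}$. Let $\mathcal P^\delta$ be the set of columns of $P^\delta$. Then $\mathcal P^\delta$ is a positive basis of $\mathbb R^n$ with cosine measure $\frac{1-\delta n}{\sqrt{n^2\delta^2-2n\delta+n^2}}$.
   Context: The canonical uniform simplex is the $n\times(n+1)$ matrix $P^0$ defined as follows, with $a_i=\sqrt{\frac{(n-i+1)(n+1)}{n(n-i+2)}}$ for $i=1,\dots,n$: for $1\le j\le n$, column $j$ has entry $-\frac{a_i}{n-i+1}$ in row $i<j$, entry $a_j$ in row $j$, and $0$ in rows $i>j$; column $n+1$ has entry $-\frac{a_i}{n-i+1}$ in every row $i$. $e_1$ is the first standard basis vector. A finite set $\mathcal P$ is a positive basis if its positive span $\{\sum\lambda_id_i:\lambda_i\ge0\}$ is $\mathbb R^n$ and no $d\in\mathcal P$ lies in the positive span of $\mathcal P\setminus\{d\}$. The cosine measure of a finite set $\mathcal S\subset\mathbb R^n\setminus\{\mathbf 0\}$ is $\operatorname{cm}(\mathcal S)=\min_{\|u\|=1}\max_{d\in\mathcal S}\frac{d^\top u}{\|d\|}$. *)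

theory Defs
  imports Complex_Main
begin

text \<open>Vectors of R^n are represented as functions nat => real whose support lies
in the index set {1..n} (rows are indexed 1..n as in the paper).\<close>

definition Rn :: "nat \<Rightarrow> (nat \<Rightarrow> real) set" where
  "Rn n = {x. \<forall>i. i \<notin> {1..n} \<longrightarrow> x i = 0}"

definition vinner :: "nat \<Rightarrow> (nat \<Rightarrow> real) \<Rightarrow> (nat \<Rightarrow> real) \<Rightarrow> real" where
  "vinner n x y = (\<Sum>i=1..n. x i * y i)"

definition vnorm :: "nat \<Rightarrow> (nat \<Rightarrow> real) \<Rightarrow> real" where
  "vnorm n x = sqrt (\<Sum>i=1..n. (x i)^2)"

definition e1 :: "nat \<Rightarrow> real" where
  "e1 i = (if i = 1 then 1 else 0)"

definition pos_span :: "(nat \<Rightarrow> real) set \<Rightarrow> (nat \<Rightarrow> real) set" where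
  "pos_span S = {x. \<exists>l. (\<forall>d\<in>S. l d \<ge> 0) \<and> x = (\<lambda>i. \<Sum>d\<in>S. l d * d i)}"

definition positive_basis :: "nat \<Rightarrow> (nat \<Rightarrow> real) set \<Rightarrow> bool" where
  "positive_basis n S \<longleftrightarrow> finite S \<and> pos_span S = Rn n \<and>
     (\<forall>d\<in>S. d \<notin> pos_span (S - {d}))"

text \<open>Cosine measure: min over unit u of max over d of d^T u / ||d||
  (the minimum is attained, so it equals the infimum).\<close>
definition cosine_measure :: "nat \<Rightarrow> (nat \<Rightarrow> real) set \<Rightarrow> real" where
  "cosine_measure n S =
     Inf ((\<lambda>u. Max ((\<lambda>d. vinner n d u / vnorm n d) ` S)) ` {u \<in> Rn n. vnorm n u = 1})"

definition simplex_a :: "nat \<Rightarrow> nat \<Rightarrow> real" where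
  "simplex_a n i = sqrt ((real n - real i + 1) * (real n + 1) / (real n * (real n - real i + 2)))"

definition P0_col :: "nat \<Rightarrow> nat \<Rightarrow> nat \<Rightarrow> real" where
  "P0_col n j i =
     (if i < 1 \<or> i > n then 0
      else if j = n + 1 then - simplex_a n i / (real n - real i + 1)
      else if i < j then - simplex_a n i / (real n - real i + 1)
      else if i = j then simplex_a n j
      else 0)"

definition Pdelta_alpha :: "nat \<Rightarrow> real \<Rightarrow> real" where
  "Pdelta_alpha n \<delta> = real n / sqrt (real n ^ 2 * \<delta>^2 - 2 * real n * \<delta> + real n ^ 2)"

definition Pdelta_col :: "nat \<Rightarrow> real \<Rightarrow> nat \<Rightarrow> nat \<Rightarrow> real" where
  "Pdelta_col n \<delta> j =
     (if j = 1 then P0_col n 1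
      else (\<lambda>i. Pdelta_alpha n \<delta> * (P0_col n j i + \<delta> * e1 i)))"

end

theory Submission
  imports Defs
begin

text \<open>The columns \<open>D j\<close> of \<open>P\<^sup>0\<close> are unit vectors with pairwise inner products \<open>-1/n\<close>, they sum
  to zero, and they form a tight frame: \<open>\<Sum>j. D j D j\<^sup>T = (n + 1)/n I\<close>.
  The columns \<open>p j\<close> of \<open>P\<^sup>\<delta>\<close> satisfy \<open>\<langle>D k, p j\<rangle> > 0\<close> iff \<open>j = k\<close>, so no \<open>p k\<close> is a nonnegative
  combination of the others; the frame shows that they span \<open>\<real>\<^sup>n\<close> linearly, and
  \<open>\<alpha>(1 - n\<delta>) p 1 + \<Sum>j\<ge>2. p j = 0\<close> is a strictly positive dependence, so they span positively.
  The direction \<open>u = -D 1\<close> has inner product \<open>\<alpha>(1/n - \<delta>)\<close> with every \<open>p j\<close>, \<open>j \<ge> 2\<close>, and \<open>-1\<close>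
  with \<open>p 1\<close>.  Conversely, if all \<open>\<langle>p j, u\<rangle>\<close> were smaller, the numbers \<open>s j = \<langle>D j, u\<rangle> \<ge> -1\<close>, with
  \<open>\<Sum> s j = 0\<close> and \<open>\<Sum> (s j)\<^sup>2 = (n + 1)/n\<close>, would make \<open>\<Sum>j\<ge>2. (T - s j)(s j + 1)\<close> negative, where
  \<open>T\<close> is the resulting strict upper bound on \<open>s j\<close>.\<close>

lemma vinner_commute: "vinner n x y = vinner n y x"
  unfolding vinner_def by (simp add: mult.commute)

lemma vinner_sum_right: "vinner n v (\<lambda>r. \<Sum>d\<in>S. l d * d r) = (\<Sum>d\<in>S. l d * vinner n v d)"
  unfolding vinner_def by (simp add: sum_distrib_left sum.swap[of _ S] algebra_simps)

lemma vinner_scale_add_right: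
  "vinner n x (\<lambda>i. a * (y i + b * z i)) = a * (vinner n x y + b * vinner n x z)"
  unfolding vinner_def by (simp add: sum_distrib_left sum.distrib algebra_simps)

lemma vinner_uminus_right: "vinner n x (\<lambda>i. - y i) = - vinner n x y"
  unfolding vinner_def by (simp add: sum_negf)

lemma vnorm_eq_sqrt_vinner: "vnorm n x = sqrt (vinner n x x)"
  unfolding vnorm_def vinner_def by (simp add: power2_eq_square)

lemma vnorm_eq_1_iff: "vnorm n x = 1 \<longleftrightarrow> vinner n x x = 1"
  by (simp add: vnorm_eq_sqrt_vinner)

lemma vinner_ge_neg1:
  assumes "vnorm n x = 1" "vnorm n y = 1"
  shows "vinner n x y \<ge> -1"
proof -
  have "0 \<le> (\<Sum>i=1..n. (x i + y i)^2)" by (simp add: sum_nonneg)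
  also have "\<dots> = vinner n x x + 2 * vinner n x y + vinner n y y"
    unfolding vinner_def by (simp add: power2_eq_square algebra_simps sum.distrib sum_distrib_left)
  finally show ?thesis using assms by (simp add: vnorm_eq_1_iff)
qed

lemma pos_span_subset_Rn:
  assumes "S \<subseteq> Rn n"
  shows "pos_span S \<subseteq> Rn n"
proof
  fix x assume "x \<in> pos_span S"
  then obtain l where x: "x = (\<lambda>i. \<Sum>d\<in>S. l d * d i)" unfolding pos_span_def by blast
  show "x \<in> Rn n"
    using assms unfolding Rn_def x by (auto intro!: sum.neutral)
qed

lemma pos_comb_in_pos_span:
  assumes "inj_on p I" "\<forall>j\<in>I. c j \<ge> 0"
  shows "(\<lambda>r. \<Sum>j\<in>I. c j * p j r) \<in> pos_span (p ` I)"
proof -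
  define l where "l d = c (the_inv_into I p d)" for d
  have "(\<lambda>r. \<Sum>j\<in>I. c j * p j r) = (\<lambda>r. \<Sum>d\<in>p ` I. l d * d r)"
    unfolding l_def using assms(1) by (simp add: sum.reindex the_inv_into_f_f)
  moreover have "\<forall>d\<in>p ` I. l d \<ge> 0"
    unfolding l_def using assms by (auto simp: the_inv_into_f_f)
  ultimately show ?thesis unfolding pos_span_def by blast
qed

lemma not_in_pos_span_if_separated:
  assumes "vinner n v d > 0" "\<forall>e\<in>S. vinner n v e \<le> 0"
  shows "d \<notin> pos_span S"
proof
  assume "d \<in> pos_span S"
  then obtain l where l: "\<forall>e\<in>S. l e \<ge> 0" and d: "d = (\<lambda>i. \<Sum>e\<in>S. l e * e i)"
    unfolding pos_span_def by blast
  have "vinner n v d = (\<Sum>e\<in>S. l e * vinner n v e)"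
    by (subst d) (rule vinner_sum_right)
  also have "\<dots> \<le> 0"
    using assms(2) l by (intro sum_nonpos) (simp add: mult_nonneg_nonpos)
  finally show False using assms(1) by simp
qed

text \<open>Adding a large multiple of the dependence makes all coefficients nonnegative.\<close>
lemma pos_span_eq_Rn_if_positive_dependence:
  assumes "finite I" "inj_on p I" "p ` I \<subseteq> Rn n"
    and span: "\<And>x. x \<in> Rn n \<Longrightarrow> \<exists>c. x = (\<lambda>r. \<Sum>j\<in>I. c j * p j r)"
    and w_pos: "\<forall>j\<in>I. w j > 0" and dep: "\<And>r. (\<Sum>j\<in>I. w j * p j r) = 0"
  shows "pos_span (p ` I) = Rn n"
proof
  show "pos_span (p ` I) \<subseteq> Rn n" using assms(3) by (rule pos_span_subset_Rn)
  show "Rn n \<subseteq> pos_span (p ` I)"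
  proof
    fix x assume "x \<in> Rn n"
    then obtain c where x: "x = (\<lambda>r. \<Sum>j\<in>I. c j * p j r)" using span by blast
    define t where "t = (\<Sum>j\<in>I. \<bar>c j\<bar> / w j)"
    have nonneg: "\<forall>j\<in>I. c j + t * w j \<ge> 0"
    proof
      fix j assume j: "j \<in> I"
      have "\<bar>c j\<bar> / w j \<le> t"
        unfolding t_def using assms(1) w_pos j by (intro member_le_sum) auto
      then show "c j + t * w j \<ge> 0" using w_pos j by (simp add: divide_le_eq)
    qed
    have "x = (\<lambda>r. \<Sum>j\<in>I. (c j + t * w j) * p j r)"
      unfolding x using dep
      by (simp add: algebra_simps sum.distrib flip: sum_distrib_left)
    with pos_comb_in_pos_span[OF assms(2) nonneg] show "x \<in> pos_span (p ` I)" by simp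
  qed
qed

lemma positive_basisI:
  assumes "finite I" "p ` I \<subseteq> Rn n"
    and span: "\<And>x. x \<in> Rn n \<Longrightarrow> \<exists>c. x = (\<lambda>r. \<Sum>j\<in>I. c j * p j r)"
    and w_pos: "\<forall>j\<in>I. w j > 0" and dep: "\<And>r. (\<Sum>j\<in>I. w j * p j r) = 0"
    and pos: "\<And>k. k \<in> I \<Longrightarrow> vinner n (v k) (p k) > 0"
    and nonpos: "\<And>j k. j \<in> I \<Longrightarrow> k \<in> I \<Longrightarrow> j \<noteq> k \<Longrightarrow> vinner n (v k) (p j) \<le> 0"
  shows "positive_basis n (p ` I)"
proof -
  have inj: "inj_on p I"
  proof (rule inj_onI, rule ccontr)
    fix j k assume "j \<in> I" "k \<in> I" "p j = p k" "j \<noteq> k"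
    then show False using pos[of k] nonpos[of j k] by simp
  qed
  have "d \<notin> pos_span (p ` I - {d})" if "d \<in> p ` I" for d
  proof -
    obtain k where k: "k \<in> I" "d = p k" using \<open>d \<in> p ` I\<close> by blast
    show ?thesis
      using k pos[of k] nonpos[of _ k] by (intro not_in_pos_span_if_separated) auto
  qed
  then show ?thesis
    unfolding positive_basis_def
    using pos_span_eq_Rn_if_positive_dependence[OF assms(1) inj assms(2) span w_pos dep]
    using assms(1) by blast
qed

lemma cosine_measure_eqI:
  assumes "finite S"
    and lower: "\<And>u. u \<in> Rn n \<Longrightarrow> vnorm n u = 1 \<Longrightarrow> \<exists>d\<in>S. vinner n d u / vnorm n d \<ge> m"
    and "u0 \<in> Rn n" "vnorm n u0 = 1"
    and upper: "\<And>d. d \<in> S \<Longrightarrow> vinner n d u0 / vnorm n d \<le> m"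
  shows "cosine_measure n S = m"
proof -
  define g where "g u = Max ((\<lambda>d. vinner n d u / vnorm n d) ` S)" for u
  have g_ge: "g u \<ge> m" if "u \<in> Rn n" "vnorm n u = 1" for u
    using lower[OF that] assms(1) unfolding g_def by (meson Max_ge finite_imageI imageI order_trans)
  have "S \<noteq> {}" using lower[OF assms(3,4)] by blast
  then have "g u0 = m"
    using g_ge[OF assms(3,4)] upper assms(1) unfolding g_def by (intro antisym) auto
  then have "Inf (g ` {u \<in> Rn n. vnorm n u = 1}) = m"
    using assms(3,4) g_ge by (intro cInf_eq_minimum) force+
  then show ?thesis unfolding cosine_measure_def g_def .
qed

lemma tight_frame_reconstruction:
  assumes frame: "\<And>r s. (\<Sum>j\<in>I. D j r * D j s) = (if r = s \<and> r \<in> {1..n} then c else 0)"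
    and "x \<in> Rn n"
  shows "(\<Sum>j\<in>I. vinner n x (D j) * D j r) = c * x r"
proof -
  have "(\<Sum>j\<in>I. vinner n x (D j) * D j r) = (\<Sum>s=1..n. x s * (\<Sum>j\<in>I. D j s * D j r))"
    unfolding vinner_def
    by (simp add: sum_distrib_left sum_distrib_right sum.swap[of _ I] mult.assoc)
  also have "\<dots> = (\<Sum>s=1..n. if s = r then c * x r else 0)"
    using frame by (intro sum.cong) auto
  also have "\<dots> = c * x r"
    using \<open>x \<in> Rn n\<close> unfolding Rn_def by auto
  finally show ?thesis .
qed

lemma tight_frame_sum_squares:
  assumes frame: "\<And>r s. (\<Sum>j\<in>I. D j r * D j s) = (if r = s \<and> r \<in> {1..n} then c else 0)"
    and "u \<in> Rn n"
  shows "(\<Sum>j\<in>I. (vinner n (D j) u)^2) = c * vinner n u u"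
proof -
  have "(vinner n (D j) u)^2 = (\<Sum>r=1..n. u r * (vinner n u (D j) * D j r))" for j
    unfolding power2_eq_square
    by (subst (2) vinner_def) (simp add: vinner_commute[of n u] sum_distrib_left mult_ac)
  then have "(\<Sum>j\<in>I. (vinner n (D j) u)^2) = (\<Sum>r=1..n. u r * (\<Sum>j\<in>I. vinner n u (D j) * D j r))"
    by (simp add: sum_distrib_left sum.swap[of _ I])
  also have "\<dots> = c * vinner n u u"
    using tight_frame_reconstruction[OF frame \<open>u \<in> Rn n\<close>]
    by (simp add: vinner_def sum_distrib_left mult_ac)
  finally show ?thesis .
qed

lemma sum_atLeastAtMost_split_at:
  fixes f :: "nat \<Rightarrow> 'a::comm_monoid_add"
  assumes "m \<le> i" "i \<le> N"
  shows "(\<Sum>j=m..N. f j) = (\<Sum>j\<in>{m..<i}. f j) + f i + (\<Sum>j\<in>{i<..N}. f j)"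
proof -
  have "{m..N} = insert i ({m..<i} \<union> {i<..N})" "{m..<i} \<inter> {i<..N} = {}" using assms by auto
  then show ?thesis by (simp add: sum.union_disjoint add_ac)
qed

lemma sum_split_first:
  fixes f :: "nat \<Rightarrow> 'a::comm_monoid_add"
  shows "(\<Sum>j=1..n+1. f j) = f 1 + (\<Sum>j=2..n+1. f j)"
  by (simp add: sum.atLeast_Suc_atMost numeral_2_eq_2 del: sum.cl_ivl_Suc)

definition simplex_b :: "nat \<Rightarrow> nat \<Rightarrow> real" where
  "simplex_b n i = simplex_a n i / (real n - real i + 1)"

lemma simplex_a_b_identities:
  assumes "1 \<le> i" "i \<le> n"
  defines "y \<equiv> real n - real i + 2"
  shows "real (n + 1 - i) * simplex_b n i = simplex_a n i"
    and "(simplex_a n i)^2 = (real n + 1) / real n * (1 - 1 / y)"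
    and "simplex_a n i * simplex_b n i = (real n + 1) / real n / y"
    and "(simplex_b n i)^2 = (real n + 1) / real n * (1 / (y - 1) - 1 / y)"
proof -
  have y: "y \<ge> 2" "real n > 0" using assms by (auto simp: y_def)
  have "(simplex_a n i)^2 = (y - 1) * (real n + 1) / (real n * y)"
    using y unfolding simplex_a_def y_def by (simp add: add.assoc)
  also have "\<dots> = (real n + 1) / real n * (1 - 1 / y)"
    using y by (simp add: field_simps)
  finally show a2: "(simplex_a n i)^2 = (real n + 1) / real n * (1 - 1 / y)" .
  have b: "simplex_b n i = simplex_a n i / (y - 1)" by (simp add: simplex_b_def y_def)
  have "real (n + 1 - i) = y - 1" using assms by (simp add: y_def of_nat_diff)
  then show "real (n + 1 - i) * simplex_b n i = simplex_a n i"
    using y by (simp add: b)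
  have "simplex_a n i * simplex_b n i = (simplex_a n i)^2 / (y - 1)"
    by (simp add: b power2_eq_square)
  also have "\<dots> = (real n + 1) / real n / y"
    using y by (simp add: a2 field_simps)
  finally show ab: "simplex_a n i * simplex_b n i = (real n + 1) / real n / y" .
  have "(simplex_b n i)^2 = simplex_a n i * simplex_b n i / (y - 1)"
    by (simp add: b power2_eq_square)
  also have "\<dots> = (real n + 1) / real n * (1 / (y - 1) - 1 / y)"
    using y by (simp add: ab field_simps)
  finally show "(simplex_b n i)^2 = (real n + 1) / real n * (1 / (y - 1) - 1 / y)" .
qed

lemma sum_simplex_b_sq:
  assumes "1 \<le> j" "j \<le> n + 1"
  shows "(\<Sum>i\<in>{1..<j}. (simplex_b n i)^2)
    = (real n + 1) / real n * (1 / (real n - real j + 2) - 1 / (real n + 1))"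
proof -
  define g where "g i = (real n + 1) / real n / (real n - real i + 2)" for i :: nat
  have "(\<Sum>i\<in>{1..<j}. (simplex_b n i)^2) = (\<Sum>i\<in>{1..<j}. g (Suc i) - g i)"
    using assms by (intro sum.cong) (auto simp: simplex_a_b_identities(4) g_def algebra_simps)
  also have "\<dots> = g j - g 1"
    using assms by (intro sum_Suc_diff') simp
  finally show ?thesis by (simp add: g_def right_diff_distrib add.commute)
qed

lemma P0_col_eq:
  assumes "1 \<le> i" "i \<le> n" "1 \<le> j" "j \<le> n + 1"
  shows "P0_col n j i = (if j < i then 0 else if j = i then simplex_a n i else - simplex_b n i)"
  using assms unfolding P0_col_def simplex_b_def by auto

lemma P0_col_in_Rn: "P0_col n j \<in> Rn n"
  unfolding Rn_def P0_col_def by auto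

lemma P0_col_1: "1 \<le> n \<Longrightarrow> P0_col n 1 = e1"
  unfolding P0_col_def e1_def simplex_a_def by (auto simp: fun_eq_iff)

lemma P0_row_weighted_sum:
  assumes "1 \<le> i" "i \<le> n"
  shows "(\<Sum>j=1..n+1. P0_col n j i * y j)
    = simplex_a n i * y i - simplex_b n i * (\<Sum>j\<in>{i<..n+1}. y j)"
proof -
  have "(\<Sum>j=1..n+1. P0_col n j i * y j) = (\<Sum>j\<in>{1..<i}. P0_col n j i * y j)
      + P0_col n i i * y i + (\<Sum>j\<in>{i<..n+1}. P0_col n j i * y j)"
    using assms by (intro sum_atLeastAtMost_split_at) auto
  also have "\<dots> = 0 + simplex_a n i * y i + (\<Sum>j\<in>{i<..n+1}. - simplex_b n i * y j)"
    using assms by (intro arg_cong2[where f = "(+)"] sum.neutral sum.cong) (auto simp: P0_col_eq)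
  finally show ?thesis by (simp add: sum_distrib_left sum_negf)
qed

lemma P0_col_sum: "(\<Sum>j=1..n+1. P0_col n j i) = 0"
proof (cases "i \<in> {1..n}")
  case True
  then show ?thesis
    using P0_row_weighted_sum[of i n "\<lambda>_. 1"] simplex_a_b_identities(1)[of i n]
    by (simp add: mult.commute)
next
  case False
  then have "P0_col n j i = 0" for j by (auto simp: P0_col_def)
  then show ?thesis by simp
qed

lemma P0_rows_orthogonal_le:
  assumes "r \<le> s"
  shows "(\<Sum>j=1..n+1. P0_col n j r * P0_col n j s) = (if r = s \<and> r \<in> {1..n} then (real n + 1) / real n else 0)"
proof (cases "r \<in> {1..n} \<and> s \<in> {1..n}")
  case False
  then show ?thesis by (auto simp: P0_col_def)
next
  case True
  then have r: "1 \<le> r" "r \<le> n" by auto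
  show ?thesis
  proof (cases "r = s")
    case True
    have "(\<Sum>j\<in>{r<..n+1}. P0_col n j r) = (\<Sum>j\<in>{r<..n+1}. - simplex_b n r)"
      using r by (intro sum.cong) (auto simp: P0_col_eq)
    then have tail: "(\<Sum>j\<in>{r<..n+1}. P0_col n j r) = - simplex_a n r"
      using simplex_a_b_identities(1)[OF r] by simp
    have diag: "P0_col n r r = simplex_a n r" using r by (simp add: P0_col_eq)
    have "(\<Sum>j=1..n+1. P0_col n j r * P0_col n j r)
        = simplex_a n r * simplex_a n r - simplex_b n r * (- simplex_a n r)"
      by (simp only: P0_row_weighted_sum[OF r] diag tail)
    also have "\<dots> = (simplex_a n r)^2 + simplex_a n r * simplex_b n r"
      by (simp add: power2_eq_square mult.commute)
    also have "\<dots> = (real n + 1) / real n"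
      unfolding simplex_a_b_identities(2,3)[OF r] by (simp add: right_diff_distrib)
    finally show ?thesis using True r by simp
  next
    case False
    then have "r < s" using assms by simp
    have "(\<Sum>j\<in>{r<..n+1}. P0_col n j s) = (\<Sum>j=1..n+1. P0_col n j s)"
      using \<open>r < s\<close> True by (intro sum.mono_neutral_left) (auto simp: P0_col_eq)
    then have tail: "(\<Sum>j\<in>{r<..n+1}. P0_col n j s) = 0" by (simp only: P0_col_sum)
    have off: "P0_col n r s = 0" using \<open>r < s\<close> by (simp add: P0_col_def)
    have "(\<Sum>j=1..n+1. P0_col n j r * P0_col n j s) = simplex_a n r * 0 - simplex_b n r * 0"
      by (simp only: P0_row_weighted_sum[OF r] off tail)
    then show ?thesis using \<open>r < s\<close> by simp
  qed
qed

lemma P0_rows_orthogonal: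
  "(\<Sum>j\<in>{1..n+1}. P0_col n j r * P0_col n j s) = (if r = s \<and> r \<in> {1..n} then (real n + 1) / real n else 0)"
  using P0_rows_orthogonal_le[of r s n] P0_rows_orthogonal_le[of s r n]
  by (cases "r \<le> s") (auto simp: mult.commute)

lemma P0_gram_le:
  assumes "1 \<le> n" "1 \<le> j" "j \<le> k" "k \<le> n + 1"
  shows "vinner n (P0_col n j) (P0_col n k) = (if j = k then 1 else - 1 / real n)"
proof -
  define C where "C = (real n + 1) / real n"
  have n: "real n > 0" using assms(1) by simp
  have C: "C / (real n + 1) = 1 / real n" "C - C / (real n + 1) = 1"
    using n by (simp_all add: C_def diff_divide_distrib[symmetric])
  show ?thesis
  proof (cases "j \<le> n")
    case True
    define y where "y = real n - real j + 2"
    have "vinner n (P0_col n j) (P0_col n k) = (\<Sum>i\<in>{1..<j}. P0_col n j i * P0_col n k i)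
        + P0_col n j j * P0_col n k j + (\<Sum>i\<in>{j<..n}. P0_col n j i * P0_col n k i)"
      unfolding vinner_def using True assms by (intro sum_atLeastAtMost_split_at) auto
    also have "\<dots> = (\<Sum>i\<in>{1..<j}. (simplex_b n i)^2) + simplex_a n j * P0_col n k j + 0"
      using assms True
      by (intro arg_cong2[where f = "(+)"] sum.cong sum.neutral) (auto simp: P0_col_eq power2_eq_square)
    also have "\<dots> = C * (1 / y - 1 / (real n + 1))
        + (if j = k then C * (1 - 1 / y) else - (C / y))"
    proof -
      have "(\<Sum>i\<in>{1..<j}. (simplex_b n i)^2) = C * (1 / y - 1 / (real n + 1))"
        using sum_simplex_b_sq[of j n] assms by (simp add: C_def y_def)
      moreover have "simplex_a n j * P0_col n k j = (if j = k then C * (1 - 1 / y) else - (C / y))"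
        using simplex_a_b_identities(2,3)[of j n] assms True
        by (cases "j = k") (simp_all add: P0_col_eq C_def y_def power2_eq_square)
      ultimately show ?thesis by (simp only: add_0_right)
    qed
    also have "\<dots> = (if j = k then 1 else - 1 / real n)"
      using C by (simp add: right_diff_distrib)
    finally show ?thesis .
  next
    case False
    then have "j = n + 1" "k = n + 1" using assms by auto
    then have "vinner n (P0_col n j) (P0_col n k) = (\<Sum>i\<in>{1..<n+1}. (simplex_b n i)^2)"
      unfolding vinner_def by (intro sum.cong) (auto simp: P0_col_eq power2_eq_square)
    also have "\<dots> = 1"
      using sum_simplex_b_sq[of "n + 1" n] C by (simp add: C_def right_diff_distrib)
    finally show ?thesis using \<open>j = n + 1\<close> \<open>k = n + 1\<close> by simp
  qed
qed

lemma P0_gram: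
  assumes "1 \<le> n" "j \<in> {1..n+1}" "k \<in> {1..n+1}"
  shows "vinner n (P0_col n j) (P0_col n k) = (if j = k then 1 else - 1 / real n)"
proof (cases "j \<le> k")
  case False
  then have "vinner n (P0_col n k) (P0_col n j) = - 1 / real n"
    using assms P0_gram_le[of n k j] by auto
  then show ?thesis using False by (simp add: vinner_commute)
qed (use assms P0_gram_le[of n j k] in auto)

lemma sum_vinner_P0_col: "(\<Sum>j=1..n+1. vinner n (P0_col n j) u) = 0"
proof -
  have "(\<Sum>j=1..n+1. vinner n (P0_col n j) u) = (\<Sum>i=1..n. (\<Sum>j=1..n+1. P0_col n j i) * u i)"
    unfolding vinner_def by (simp only: sum_distrib_right sum.swap[of _ "{1..n+1}"])
  then show ?thesis by (simp only: P0_col_sum) simp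
qed

text \<open>In the application \<open>s1\<close> and \<open>s j\<close> are the inner products of a unit vector with the
  vertices of the canonical simplex.\<close>
lemma exists_large_simplex_coordinate:
  fixes s :: "nat \<Rightarrow> real"
  assumes "finite J" "card J = n" "1 \<le> n" "0 \<le> \<delta>" "real n * \<delta> < 1"
    and ge: "\<forall>j\<in>J. s j \<ge> -1"
    and sum: "(\<Sum>j\<in>J. s j) = - s1"
    and sum_sq: "(\<Sum>j\<in>J. (s j)^2) = (real n + 1) / real n - s1^2"
    and "s1 < 1 / real n"
  shows "\<exists>j\<in>J. s j + \<delta> * s1 \<ge> 1 / real n - \<delta>"
proof (rule ccontr)
  assume contra: "\<not> ?thesis"
  define T where "T = 1 / real n - \<delta> - \<delta> * s1"
  have less_T: "s j < T" if "j \<in> J" for j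
    using that contra by (auto simp: T_def)
  have n: "real n > 0" using assms(3) by simp
  have "J \<noteq> {}" using assms(2,3) by auto
  then have "- s1 < real n * T"
    using sum sum_strict_mono[OF assms(1), of s "\<lambda>_. T"] less_T assms(2) by simp
  then have "0 < (1 - real n * \<delta>) * (1 + s1)"
    using n by (simp add: T_def algebra_simps)
  then have s1_gt: "1 + s1 > 0"
    using assms(5) by (simp add: zero_less_mult_iff)
  have "0 \<le> (\<Sum>j\<in>J. (T - s j) * (s j + 1))"
    using less_T ge by (intro sum_nonneg mult_nonneg_nonneg) (auto simp: less_imp_le)
  also have "\<dots> = (T - 1) * (\<Sum>j\<in>J. s j) + real n * T - (\<Sum>j\<in>J. (s j)^2)"
    using assms(2) by (simp add: algebra_simps power2_eq_square sum.distrib sum_subtractf sum_distrib_left)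
  also have "\<dots> = (T - 1) * (- s1) + real n * T - ((real n + 1) / real n - s1^2)"
    by (simp only: sum sum_sq)
  also have "\<dots> = - ((1 + s1) * (1 / real n + \<delta> * real n - s1 * (1 + \<delta>)))"
    using n by (simp add: T_def field_simps power2_eq_square)
  finally have nonpos: "(1 + s1) * (1 / real n + \<delta> * real n - s1 * (1 + \<delta>)) \<le> 0" by linarith
  moreover have "s1 * (1 + \<delta>) < 1 / real n * (1 + \<delta>)"
    using assms(4,9) by (intro mult_strict_right_mono) auto
  moreover have "\<delta> / real n \<le> \<delta> * real n"
  proof -
    have "1 \<le> real n * real n" using assms(3) mult_mono[of 1 "real n" 1 "real n"] by simp
    then have "\<delta> * 1 \<le> \<delta> * (real n * real n)" using assms(4) by (rule mult_left_mono)
    then show ?thesis using n by (simp add: divide_le_eq mult.assoc)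
  qed
  ultimately have "0 < (1 + s1) * (1 / real n + \<delta> * real n - s1 * (1 + \<delta>))"
    using s1_gt by (intro mult_pos_pos) (auto simp: ring_distribs)
  with nonpos show False by linarith
qed

locale Pdelta =
  fixes n :: nat and \<delta> :: real
  assumes n_ge_2: "n \<ge> 2" and delta_nonneg: "0 \<le> \<delta>" and delta_less: "\<delta> < 1 / real n"
begin

abbreviation D :: "nat \<Rightarrow> nat \<Rightarrow> real" where "D \<equiv> P0_col n"
abbreviation p :: "nat \<Rightarrow> nat \<Rightarrow> real" where "p \<equiv> Pdelta_col n \<delta>"
abbreviation \<alpha> :: real where "\<alpha> \<equiv> Pdelta_alpha n \<delta>"
abbreviation Q :: real where "Q \<equiv> real n ^ 2 * \<delta>^2 - 2 * real n * \<delta> + real n ^ 2"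

declare sum.cl_ivl_Suc [simp del]

lemma n_pos: "real n > 0"
  using n_ge_2 by simp

lemma n_delta_less_1: "real n * \<delta> < 1"
  using delta_less n_pos by (simp add: field_simps)

lemma Q_pos: "Q > 0"
proof -
  have "Q = (real n * \<delta> - 1)^2 + (real n ^ 2 - 1)"
    by (simp add: power2_eq_square algebra_simps)
  moreover have "4 \<le> real n ^ 2"
    using n_ge_2 power_mono[of 2 "real n" 2] by simp
  ultimately show ?thesis
    using zero_le_power2[of "real n * \<delta> - 1"] by linarith
qed

lemma alpha_pos: "\<alpha> > 0"
  unfolding Pdelta_alpha_def using Q_pos n_pos by simp

lemma alpha_sq: "\<alpha>^2 = real n ^ 2 / Q"
  unfolding Pdelta_alpha_def using Q_pos by (simp add: power_divide)

lemma gram: "j \<in> {1..n+1} \<Longrightarrow> k \<in> {1..n+1} \<Longrightarrow> vinner n (D j) (D k) = (if j = k then 1 else - 1 / real n)"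
  using P0_gram n_ge_2 by simp

lemma Pdelta_col_1: "p 1 = D 1"
  unfolding Pdelta_col_def by simp

lemma Pdelta_col_other: "j \<noteq> 1 \<Longrightarrow> p j = (\<lambda>i. \<alpha> * (D j i + \<delta> * D 1 i))"
  unfolding Pdelta_col_def using P0_col_1 n_ge_2 by simp

lemma Pdelta_col_in_Rn: "p j \<in> Rn n"
proof (cases "j = 1")
  case True
  show ?thesis unfolding True Pdelta_col_1 by (rule P0_col_in_Rn)
next
  case False
  then show ?thesis using P0_col_in_Rn[of n] by (simp add: Pdelta_col_other Rn_def)
qed

lemma vinner_Pdelta_col:
  "vinner n v (p j) = (if j = 1 then vinner n v (D 1) else \<alpha> * (vinner n v (D j) + \<delta> * vinner n v (D 1)))"
proof (cases "j = 1")
  case True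
  show ?thesis unfolding True Pdelta_col_1 by simp
qed (simp add: Pdelta_col_other vinner_scale_add_right)

lemma vinner_P0_Pdelta_diag_pos:
  assumes "k \<in> {1..n+1}"
  shows "vinner n (D k) (p k) > 0"
proof (cases "k = 1")
  case False
  have "1 / real n \<le> 1" "1 \<le> real n" using n_ge_2 by simp_all
  then have "\<delta> < real n" using delta_less by linarith
  then have "\<delta> / real n < 1" using n_pos by (simp add: divide_less_eq)
  then show ?thesis
    using assms False alpha_pos by (simp add: vinner_Pdelta_col gram)
qed (simp add: vinner_Pdelta_col gram)

lemma vinner_P0_Pdelta_off_neg:
  assumes "j \<in> {1..n+1}" "k \<in> {1..n+1}" "j \<noteq> k"
  shows "vinner n (D k) (p j) < 0"
proof -
  have "- 1 / real n + \<delta> < 0" "- 1 / real n + \<delta> * (- 1 / real n) < 0"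
    using delta_less delta_nonneg n_pos by (simp_all add: field_simps)
  then show ?thesis
    using assms alpha_pos n_pos
    by (auto simp: vinner_Pdelta_col gram mult_pos_neg)
qed

lemma vnorm_Pdelta_col:
  assumes "j \<in> {1..n+1}"
  shows "vnorm n (p j) = 1"
proof (cases "j = 1")
  case True
  show ?thesis unfolding True Pdelta_col_1 using gram[of 1 1] by (simp add: vnorm_eq_1_iff)
next
  case False
  have "vinner n (p j) (D k) = vinner n (D k) (p j)" for k
    by (rule vinner_commute)
  then have "vinner n (p j) (p j) = \<alpha> * (\<alpha> * (1 + \<delta> * (- 1 / real n)) + \<delta> * (\<alpha> * (- 1 / real n + \<delta>)))"
    using assms False by (simp add: vinner_Pdelta_col[of "p j" j] vinner_Pdelta_col[of "D _" j] gram)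
  also have "\<dots> = \<alpha>^2 * (Q / real n ^ 2)"
    using n_pos by (simp add: field_simps power2_eq_square)
  also have "\<dots> = 1"
    using alpha_sq Q_pos n_pos by simp
  finally show ?thesis by (simp add: vnorm_eq_1_iff)
qed

lemma Pdelta_positive_dependence:
  "(\<Sum>j=1..n+1. (if j = 1 then \<alpha> * (1 - real n * \<delta>) else 1) * p j r) = 0"
proof -
  have tail: "(\<Sum>j=2..n+1. D j r) = - D 1 r"
    using P0_col_sum[of n r, unfolded sum_split_first] by linarith
  have "(\<Sum>j=2..n+1. (if j = 1 then \<alpha> * (1 - real n * \<delta>) else 1) * p j r)
      = (\<Sum>j=2..n+1. \<alpha> * D j r + \<alpha> * \<delta> * D 1 r)"
    by (intro sum.cong) (auto simp: Pdelta_col_other algebra_simps)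
  also have "\<dots> = \<alpha> * (\<Sum>j=2..n+1. D j r) + real n * (\<alpha> * \<delta> * D 1 r)"
    by (simp add: sum.distrib sum_distrib_left)
  also have "\<dots> = - \<alpha> * D 1 r + real n * (\<alpha> * \<delta> * D 1 r)"
    unfolding tail by simp
  finally show ?thesis
    unfolding sum_split_first Pdelta_col_1 by (simp add: algebra_simps)
qed

lemma Pdelta_lin_span:
  assumes "x \<in> Rn n"
  shows "\<exists>c. x = (\<lambda>r. \<Sum>j=1..n+1. c j * p j r)"
proof -
  define C where "C = (real n + 1) / real n"
  define b where "b j = vinner n x (D j) / C" for j
  have x: "x r = (\<Sum>j=1..n+1. b j * D j r)" for r
  proof -
    have "(\<Sum>j=1..n+1. b j * D j r) = (\<Sum>j=1..n+1. vinner n x (D j) * D j r) / C"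
      by (simp add: b_def sum_divide_distrib)
    then show ?thesis
      using tight_frame_reconstruction[OF P0_rows_orthogonal assms, of r] n_pos
      by (simp add: C_def)
  qed
  define c where "c j = (if j = 1 then b 1 - \<delta> * (\<Sum>k=2..n+1. b k) else b j / \<alpha>)" for j
  have "(\<Sum>j=1..n+1. c j * p j r) = x r" for r
  proof -
    have tail: "(\<Sum>j=2..n+1. c j * p j r) = (\<Sum>j=2..n+1. b j * D j r) + \<delta> * D 1 r * (\<Sum>j=2..n+1. b j)"
    proof -
      have "(\<Sum>j=2..n+1. c j * p j r) = (\<Sum>j=2..n+1. b j * D j r + \<delta> * D 1 r * b j)"
        using alpha_pos by (intro sum.cong) (auto simp: c_def Pdelta_col_other algebra_simps)
      then show ?thesis by (simp add: sum.distrib sum_distrib_left)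
    qed
    have "(\<Sum>j=1..n+1. c j * p j r) = c 1 * D 1 r + ((\<Sum>j=2..n+1. b j * D j r) + \<delta> * D 1 r * (\<Sum>j=2..n+1. b j))"
      by (simp only: sum_split_first tail Pdelta_col_1)
    also have "\<dots> = (\<Sum>j=1..n+1. b j * D j r)"
      unfolding sum_split_first by (simp add: c_def algebra_simps)
    finally show ?thesis using x[of r] by simp
  qed
  then show ?thesis by (intro exI[of _ c]) (auto simp: fun_eq_iff)
qed

lemma Pdelta_positive_basis: "positive_basis n (p ` {1..n+1})"
proof (rule positive_basisI[where v = D and w = "\<lambda>j. if j = 1 then \<alpha> * (1 - real n * \<delta>) else 1"])
  show "\<forall>j\<in>{1..n+1}. 0 < (if j = 1 then \<alpha> * (1 - real n * \<delta>) else 1)"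
    using alpha_pos n_delta_less_1 by simp
qed (use Pdelta_col_in_Rn Pdelta_lin_span Pdelta_positive_dependence vinner_P0_Pdelta_diag_pos
      vinner_P0_Pdelta_off_neg in \<open>auto simp: less_imp_le\<close>)

lemma cosine_value_eq: "(1 - \<delta> * real n) / sqrt Q = \<alpha> * (1 / real n - \<delta>)"
  unfolding Pdelta_alpha_def using n_pos Q_pos by (simp add: field_simps)

lemma cosine_value_le: "\<alpha> * (1 / real n - \<delta>) \<le> 1 / real n"
proof -
  have "Q - (real n * (1 - real n * \<delta>))^2 = (real n ^ 2 - 1) * (real n * \<delta>) * (2 - real n * \<delta>)"
    by (simp add: power2_eq_square algebra_simps)
  moreover have "0 \<le> (real n ^ 2 - 1) * (real n * \<delta>) * (2 - real n * \<delta>)"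
    using n_ge_2 delta_nonneg n_delta_less_1 by (intro mult_nonneg_nonneg) (auto simp: one_le_power)
  ultimately have "(real n * (1 - real n * \<delta>))^2 \<le> Q" by linarith
  then have "real n * (1 - real n * \<delta>) \<le> sqrt Q" by (rule real_le_rsqrt)
  then show ?thesis
    unfolding cosine_value_eq[symmetric] using Q_pos n_pos by (simp add: field_simps)
qed

lemma ex_Pdelta_col_inner_ge:
  assumes "u \<in> Rn n" "vnorm n u = 1"
  shows "\<exists>j\<in>{1..n+1}. vinner n (p j) u \<ge> \<alpha> * (1 / real n - \<delta>)"
proof (cases "vinner n (D 1) u \<ge> \<alpha> * (1 / real n - \<delta>)")
  case True
  then have "vinner n (p 1) u \<ge> \<alpha> * (1 / real n - \<delta>)" by (simp only: Pdelta_col_1)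
  then show ?thesis by (intro bexI[of _ 1]) auto
next
  case False
  define s where "s j = vinner n (D j) u" for j
  have "\<forall>j\<in>{2..n+1}. s j \<ge> -1"
    unfolding s_def using assms(2) gram by (auto intro!: vinner_ge_neg1 simp: vnorm_eq_1_iff)
  moreover have "(\<Sum>j=2..n+1. s j) = - s 1"
    using sum_vinner_P0_col[of n u, unfolded sum_split_first] unfolding s_def by linarith
  moreover have "(\<Sum>j=2..n+1. (s j)^2) = (real n + 1) / real n - (s 1)^2"
  proof -
    have "vinner n u u = 1" using assms(2) by (simp add: vnorm_eq_1_iff)
    then show ?thesis
      using tight_frame_sum_squares[OF P0_rows_orthogonal assms(1), unfolded sum_split_first]
      unfolding s_def by simp
  qed
  moreover have "s 1 < 1 / real n"
    using False cosine_value_le by (simp add: s_def)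
  ultimately obtain j where j: "j \<in> {2..n+1}" and "s j + \<delta> * s 1 \<ge> 1 / real n - \<delta>"
    using exists_large_simplex_coordinate[of "{2..n+1}" n \<delta> s "s 1"] n_ge_2 delta_nonneg n_delta_less_1
    by auto
  then have "\<alpha> * (1 / real n - \<delta>) \<le> \<alpha> * (s j + \<delta> * s 1)"
    using alpha_pos by (intro mult_left_mono) auto
  also have "\<dots> = vinner n (p j) u"
    using j by (simp add: vinner_commute[of n "p j"] vinner_Pdelta_col s_def vinner_commute[of n u])
  finally show ?thesis using j by auto
qed

lemma Pdelta_cosine_measure: "cosine_measure n (p ` {1..n+1}) = \<alpha> * (1 / real n - \<delta>)"
proof (rule cosine_measure_eqI)
  define u0 where "u0 = (\<lambda>i. - D 1 i)"
  show "\<exists>d\<in>p ` {1..n+1}. vinner n d u / vnorm n d \<ge> \<alpha> * (1 / real n - \<delta>)"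
    if "u \<in> Rn n" "vnorm n u = 1" for u
    using ex_Pdelta_col_inner_ge[OF that] vnorm_Pdelta_col by auto
  show "u0 \<in> Rn n" using P0_col_in_Rn[of n 1] by (simp add: u0_def Rn_def)
  show "vnorm n u0 = 1"
    using gram[of 1 1] by (simp add: u0_def vnorm_eq_1_iff vinner_def)
  show "vinner n d u0 / vnorm n d \<le> \<alpha> * (1 / real n - \<delta>)" if d: "d \<in> p ` {1..n+1}" for d
  proof -
    obtain j where j: "j \<in> {1..n+1}" "d = p j" using d by blast
    have "vinner n d u0 = - vinner n (D 1) (p j)"
      by (simp add: j(2) u0_def vinner_uminus_right vinner_commute[of n "p j"])
    also have "\<dots> = (if j = 1 then -1 else \<alpha> * (1 / real n - \<delta>))"
      using j gram[of 1 j] gram[of 1 1] by (simp add: vinner_Pdelta_col algebra_simps)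
    finally have "vinner n d u0 = (if j = 1 then -1 else \<alpha> * (1 / real n - \<delta>))" .
    moreover have "0 \<le> \<alpha> * (1 / real n - \<delta>)"
      using alpha_pos delta_less by simp
    ultimately show ?thesis using j vnorm_Pdelta_col by auto
  qed
qed simp

end

theorem theorem13:
  fixes n :: nat and \<delta> :: real
  assumes "n \<ge> 2" and "0 \<le> \<delta>" and "\<delta> < 1 / real n"
  shows "positive_basis n (Pdelta_col n \<delta> ` {1..n+1}) \<and>
         cosine_measure n (Pdelta_col n \<delta> ` {1..n+1}) =
           (1 - \<delta> * real n) / sqrt (real n ^ 2 * \<delta>^2 - 2 * real n * \<delta> + real n ^ 2)"
proof -
  interpret Pdelta n \<delta> using assms by unfold_locales
  show ?thesis using Pdelta_positive_basis Pdelta_cosine_measure cosine_value_eq by simp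
qed

end
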